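(* In the binary setting with $R_p=\kappa(Q-d_h)$ and $0<\beta\le1$, the maximum of $U(s,\cdot)$ over $[0,Q-d_l]$ is attained at one of the endpoints: it is attained at $q_s=0$ if $$\lambda w(p)\big[(\kappa-\pi)(Q-d_l)\big]^\beta\ \ge\ w(1-p)\Big\{\big[(\pi-\kappa)Q+\kappa d_h-\pi d_l\big]^\beta-\big[\kappa(d_h-Q)\big]^\beta\Big\},$$ and at $q_s=Q-d_l$ otherwise.
   Context: Binary setting: $\kappa>0$, $0<d_l<Q<d_h$, $0<p<1$; the demand equals $d_h$ with probability $p$ and $d_l$ with probability $1-p$. $L(y)=0$ if $y\ge0$, $L(y)=\kappa y$ if $y<0$. Value function $v(x)=x^\beta$ for $x\ge0$, $v(x)=-\lambda(-x)^\beta$ for $x<0$, with $\lambda\ge1$. Weighting $w(q)=\exp(-(-\ln q)^\mu)$, $0<\mu\le1$. Price $\pi=\pi_b^{\max}\in(0,\kappa)$. Seller's utility $U(s,q_s)=w(1-p)\,v\big(\pi q_s+L(Q-q_s-d_l)-R_p\big)+w(p)\,v\big(\pi q_s+L(Q-q_s-d_h)-R_p\big)$ for $q_s\ge0$. *)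

theory Defs
  imports Complex_Main
begin

definition Lpen :: "real \<Rightarrow> real \<Rightarrow> real" where
  "Lpen \<kappa> y = (if y \<ge> 0 then 0 else \<kappa> * y)"

definition vval :: "real \<Rightarrow> real \<Rightarrow> real \<Rightarrow> real" where
  "vval \<beta> lam x = (if x \<ge> 0 then x powr \<beta> else - lam * ((- x) powr \<beta>))"

definition wgt :: "real \<Rightarrow> real \<Rightarrow> real" where
  "wgt \<mu> q = exp (- ((- ln q) powr \<mu>))"

definition Useller ::
  "real \<Rightarrow> real \<Rightarrow> real \<Rightarrow> real \<Rightarrow> real \<Rightarrow> real \<Rightarrow> real \<Rightarrow> real \<Rightarrow> real \<Rightarrow> real \<Rightarrow> real \<Rightarrow> real" where
  "Useller \<kappa> \<beta> lam \<mu> p \<pi> Q dl dh Rp qs =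
     wgt \<mu> (1 - p) * vval \<beta> lam (\<pi> * qs + Lpen \<kappa> (Q - qs - dl) - Rp)
   + wgt \<mu> p * vval \<beta> lam (\<pi> * qs + Lpen \<kappa> (Q - qs - dh) - Rp)"

end

theory Submission
  imports Defs
begin

text \<open>On \<open>[0, Q - d\<^sub>l]\<close> the seller never runs short in the low state and always in the high
  state, so \<open>U(q) = A(\<pi> q + c)\<^sup>\<beta> - D q\<^sup>\<beta>\<close> with \<open>c = \<kappa>(d\<^sub>h - Q) > 0\<close>.
  Factoring out \<open>q\<^sup>\<beta>\<close> gives \<open>U(q) - U(0) = q\<^sup>\<beta> (A g(c/q) - D)\<close> with
  \<open>g(u) = (\<pi> + u)\<^sup>\<beta> - u\<^sup>\<beta>\<close>, which is nonincreasing for \<open>\<beta> \<le> 1\<close>. Hence the second factor is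
  nondecreasing in \<open>q\<close>: once \<open>U\<close> rises above \<open>U(0)\<close> it keeps rising, so the maximum is at
  an endpoint, and comparing \<open>U(0)\<close> with \<open>U(Q - d\<^sub>l)\<close> gives the stated condition.\<close>

lemma powr_shift_diff_antimono:
  fixes a b d \<beta> :: real
  assumes "0 < a" "a \<le> b" "0 \<le> d" "0 < \<beta>" "\<beta> \<le> 1"
  shows "(d + b) powr \<beta> - b powr \<beta> \<le> (d + a) powr \<beta> - a powr \<beta>"
proof -
  have "(\<lambda>x. (d + x) powr \<beta> - x powr \<beta>) b \<le> (\<lambda>x. (d + x) powr \<beta> - x powr \<beta>) a"
  proof (rule DERIV_nonpos_imp_nonincreasing[OF \<open>a \<le> b\<close>])
    fix x assume "a \<le> x" "x \<le> b"
    then have "0 < x" using assms by linarith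
    have deriv: "((\<lambda>x. (d + x) powr \<beta> - x powr \<beta>) has_real_derivative
        \<beta> * (d + x) powr (\<beta> - 1) - \<beta> * x powr (\<beta> - 1)) (at x)"
      using \<open>0 < x\<close> \<open>0 \<le> d\<close> by (auto intro!: derivative_eq_intros)
    have "(d + x) powr (\<beta> - 1) \<le> x powr (\<beta> - 1)"
      using powr_mono2'[of "\<beta> - 1" x "d + x"] \<open>0 < x\<close> assms by simp
    then have "\<beta> * (d + x) powr (\<beta> - 1) - \<beta> * x powr (\<beta> - 1) \<le> 0"
      using assms by (simp add: mult_left_mono)
    with deriv show "\<exists>y. ((\<lambda>x. (d + x) powr \<beta> - x powr \<beta>) has_real_derivative y) (at x) \<and> y \<le> 0"
      by blast
  qed
  then show ?thesis by simp
qed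

lemma powr_profile_le_max_endpoints:
  fixes A c d D \<beta> M q :: real
  assumes "0 \<le> A" "0 < c" "0 \<le> d" "0 < \<beta>" "\<beta> \<le> 1" "0 \<le> q" "q \<le> M"
  defines "f \<equiv> \<lambda>x. A * (d * x + c) powr \<beta> - D * x powr \<beta>"
  shows "f q \<le> max (f 0) (f M)"
proof (cases "q = 0")
  case False
  then have "0 < q" "0 < M" using assms by auto
  have scaled: "f x - f 0 = x powr \<beta> * (A * ((d + c / x) powr \<beta> - (c / x) powr \<beta>) - D)"
    if "0 < x" for x
  proof -
    have "d * x + c = x * (d + c / x)" using \<open>0 < x\<close> by (simp add: field_simps)
    then have "(d * x + c) powr \<beta> = x powr \<beta> * (d + c / x) powr \<beta>"
      using \<open>0 < x\<close> \<open>0 < c\<close> \<open>0 \<le> d\<close> by (simp add: powr_mult)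
    moreover have "c powr \<beta> = x powr \<beta> * (c / x) powr \<beta>"
      using \<open>0 < x\<close> \<open>0 < c\<close> by (simp add: powr_divide)
    ultimately show ?thesis using \<open>0 < \<beta>\<close> by (simp add: f_def algebra_simps)
  qed
  define r where "r = A * ((d + c / q) powr \<beta> - (c / q) powr \<beta>) - D"
  define s where "s = A * ((d + c / M) powr \<beta> - (c / M) powr \<beta>) - D"
  have "c / M \<le> c / q"
    using \<open>0 < q\<close> \<open>q \<le> M\<close> \<open>0 < c\<close> by (simp add: frac_le)
  then have "r \<le> s"
    using powr_shift_diff_antimono[of "c / M" "c / q" d \<beta>] \<open>0 < M\<close> assms
    by (simp add: r_def s_def mult_left_mono)
  have "q powr \<beta> * r \<le> max 0 (M powr \<beta> * s)"
  proof (cases "r \<le> 0")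
    case False
    have "q powr \<beta> \<le> M powr \<beta>" using powr_mono2[of \<beta> q M] assms by simp
    then have "q powr \<beta> * r \<le> M powr \<beta> * r" using False by (simp add: mult_right_mono)
    also have "\<dots> \<le> M powr \<beta> * s" using \<open>r \<le> s\<close> by (simp add: mult_left_mono)
    finally show ?thesis by simp
  next
    case True
    then have "q powr \<beta> * r \<le> 0" by (simp add: mult_nonneg_nonpos)
    then show ?thesis by simp
  qed
  then show ?thesis
    using scaled[OF \<open>0 < q\<close>] scaled[OF \<open>0 < M\<close>] by (simp add: r_def s_def)
qed simp

lemma Lpen_nonpos: "y \<le> 0 \<Longrightarrow> Lpen \<kappa> y = \<kappa> * y"
  by (simp add: Lpen_def)

lemma vval_nonneg: "0 \<le> x \<Longrightarrow> vval \<beta> lam x = x powr \<beta>"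
  by (simp add: vval_def)

lemma vval_nonpos: "x \<le> 0 \<Longrightarrow> vval \<beta> lam x = - lam * (- x) powr \<beta>"
  by (cases "x = 0") (simp_all add: vval_def)

lemma Useller_binary_eq:
  fixes \<kappa> \<beta> lam \<mu> p \<pi> Q dl dh q :: real
  assumes "0 \<le> \<pi>" "\<pi> \<le> \<kappa>" "Q \<le> dh" "0 \<le> q" "q \<le> Q - dl"
  shows "Useller \<kappa> \<beta> lam \<mu> p \<pi> Q dl dh (\<kappa> * (Q - dh)) q
       = wgt \<mu> (1 - p) * (\<pi> * q + \<kappa> * (dh - Q)) powr \<beta>
         - lam * wgt \<mu> p * (\<kappa> - \<pi>) powr \<beta> * q powr \<beta>"
proof -
  have low: "\<pi> * q + Lpen \<kappa> (Q - q - dl) - \<kappa> * (Q - dh) = \<pi> * q + \<kappa> * (dh - Q)"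
    using assms by (simp add: Lpen_def algebra_simps)
  have high: "\<pi> * q + Lpen \<kappa> (Q - q - dh) - \<kappa> * (Q - dh) = - ((\<kappa> - \<pi>) * q)"
    using assms by (simp add: Lpen_nonpos algebra_simps)
  have "0 \<le> \<pi> * q + \<kappa> * (dh - Q)" "0 \<le> (\<kappa> - \<pi>) * q"
    using assms by simp_all
  then show ?thesis
    using assms by (simp add: Useller_def low high vval_nonneg vval_nonpos powr_mult)
qed

theorem mainTheorem6:
  fixes \<kappa> \<beta> lam \<mu> p \<pi> Q dl dh Rp :: real
  assumes "\<kappa> > 0" and "0 < dl" and "dl < Q" and "Q < dh"
    and "0 < p" and "p < 1" and "lam \<ge> 1" and "0 < \<mu>" and "\<mu> \<le> 1"
    and "0 < \<pi>" and "\<pi> < \<kappa>"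
    and "0 < \<beta>" and "\<beta> \<le> 1"
    and "Rp = \<kappa> * (Q - dh)"
  defines "U \<equiv> Useller \<kappa> \<beta> lam \<mu> p \<pi> Q dl dh Rp"
  defines "cond \<equiv> lam * wgt \<mu> p * (((\<kappa> - \<pi>) * (Q - dl)) powr \<beta>)
      \<ge> wgt \<mu> (1 - p) * ((((\<pi> - \<kappa>) * Q + \<kappa> * dh - \<pi> * dl) powr \<beta>)
                          - ((\<kappa> * (dh - Q)) powr \<beta>))"
  shows "(cond \<longrightarrow> (\<forall>q \<in> {0..Q - dl}. U q \<le> U 0))
       \<and> (\<not> cond \<longrightarrow> (\<forall>q \<in> {0..Q - dl}. U q \<le> U (Q - dl)))"
proof -
  define M where "M = Q - dl"
  define f where "f = (\<lambda>x. wgt \<mu> (1 - p) * (\<pi> * x + \<kappa> * (dh - Q)) powr \<beta>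
                          - lam * wgt \<mu> p * (\<kappa> - \<pi>) powr \<beta> * x powr \<beta>)"
  have U_eq: "U x = f x" if "0 \<le> x" "x \<le> M" for x
    using Useller_binary_eq[of \<pi> \<kappa> Q dh x dl] that assms
    by (simp add: U_def f_def M_def)
  have endpoints: "U q \<le> max (U 0) (U M)" if "0 \<le> q" "q \<le> M" for q
    using powr_profile_le_max_endpoints[of "wgt \<mu> (1 - p)" "\<kappa> * (dh - Q)" \<pi> \<beta> q M
        "lam * wgt \<mu> p * (\<kappa> - \<pi>) powr \<beta>"] that assms U_eq[of 0] U_eq[of M] U_eq[of q]
    by (simp add: wgt_def f_def M_def)
  have "U 0 = wgt \<mu> (1 - p) * (\<kappa> * (dh - Q)) powr \<beta>"
    using U_eq[of 0] assms by (simp add: f_def M_def)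
  moreover have "U M = wgt \<mu> (1 - p) * ((\<pi> - \<kappa>) * Q + \<kappa> * dh - \<pi> * dl) powr \<beta>
      - lam * wgt \<mu> p * ((\<kappa> - \<pi>) * (Q - dl)) powr \<beta>"
  proof -
    have "\<pi> * M + \<kappa> * (dh - Q) = (\<pi> - \<kappa>) * Q + \<kappa> * dh - \<pi> * dl"
      by (simp add: M_def algebra_simps)
    moreover have "(\<kappa> - \<pi>) powr \<beta> * M powr \<beta> = ((\<kappa> - \<pi>) * (Q - dl)) powr \<beta>"
      using assms by (simp add: M_def powr_mult)
    ultimately show ?thesis using U_eq[of M] assms by (simp add: f_def M_def mult.assoc)
  qed
  ultimately have "cond \<longleftrightarrow> U M \<le> U 0"
    unfolding cond_def by (simp only: right_diff_distrib) linarith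
  with endpoints show ?thesis
    unfolding M_def by (metis atLeastAtMost_iff max.absorb1 max.absorb2 nle_le)
qed

end
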